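(* Let $r\in\mathbb{N}$ be fixed and let $\chi:\mathbb{R}_+\to\mathbb{R}$ be a kernel such that $M_0(\chi)>0$. If $f\in CB_{\mathrm{comp}}(\mathbb{R}_+)$, then for every $1\le p<\infty$, $$\lim_{w\to\infty}\left\|E_{w,r}^{\chi}f-f\right\|_p=0.$$
   Context: $\mathbb{R}_+=(0,\infty)$. A kernel is a continuous function $\chi:\mathbb{R}_+\to\mathbb{R}$ such that: (1) $\int_{\mathbb{R}_+}|\chi(x)|\frac{dx}{x}<\infty$ and $\chi$ is bounded on $[1/e,e]$; (2) $\sum_{k\in\mathbb{Z}}\chi(e^{-k}u)=1$ for every $u\in\mathbb{R}_+$, and $M_0(\chi):=\sup_{u\in\mathbb{R}_+}\sum_{k\in\mathbb{Z}}|\chi(e^{-k}u)|<+\infty$; (3) $\lim_{\gamma\to\infty}\sum_{|k-\log u|>\gamma}|\chi(e^{-k}u)|=0$ uniformly with respect to $u\in\mathbb{R}_+$. For $r\in\mathbb{N}$, $w>0$ and a locally integrable $f:\mathbb{R}_+\to\mathbb{R}$, $$\left(E_{w,r}^{\chi}f\right)(x):=\sum_{k\in\mathbb{Z}}\chi(e^{-k}x^{w})\, w^{r}\int_1^{e^{1/w}}\!\!\cdots\!\int_1^{e^{1/w}}\sum_{m=1}^{r}(-1)^{1-m}\binom{r}{m}f\!\left(e^{k/w}(t_1\cdots t_r)^{m/r}\right)\frac{dt_1}{t_1}\cdots\frac{dt_r}{t_r},\quad x\in\mathbb{R}_+.$$ $CB_{\mathrm{comp}}(\mathbb{R}_+)$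 is the space of bounded continuous functions on $\mathbb{R}_+$ with compact support contained in $\mathbb{R}_+$. For measurable $g$, $\|g\|_p:=\left(\int_{\mathbb{R}_+}|g(x)|^p\frac{dx}{x}\right)^{1/p}$. *)

theory Defs
  imports "HOL-Analysis.Analysis"
begin

definition M0 :: "(real \<Rightarrow> real) \<Rightarrow> ennreal" where
  "M0 K = (SUP u\<in>{0<..}. (\<integral>\<^sup>+ k. ennreal \<bar>K (exp (- real_of_int k) * u)\<bar> \<partial>count_space (UNIV::int set)))"

definition is_kernel :: "(real \<Rightarrow> real) \<Rightarrow> bool" where
  "is_kernel K \<longleftrightarrow>
     continuous_on {0<..} K \<and>
     (\<integral>\<^sup>+ x\<in>{0<..}. ennreal (\<bar>K x\<bar> / x) \<partial>lborel) < \<infinity> \<and>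
     bounded (K ` {exp (-1)..exp 1}) \<and>
     (\<forall>u>0. ((\<lambda>k::int. K (exp (- real_of_int k) * u)) has_sum 1) UNIV) \<and>
     M0 K < \<infinity> \<and>
     (\<forall>\<epsilon>>0. \<exists>\<Gamma>. \<forall>\<gamma>\<ge>\<Gamma>. \<forall>u>0.
        (\<integral>\<^sup>+ k. ennreal \<bar>K (exp (- real_of_int k) * u)\<bar>
           \<partial>count_space {k::int. \<bar>real_of_int k - ln u\<bar> > \<gamma>}) < ennreal \<epsilon>)"

definition E_inner :: "(real \<Rightarrow> real) \<Rightarrow> real \<Rightarrow> nat \<Rightarrow> int \<Rightarrow> real" where
  "E_inner f w r k = w ^ r *
     (\<integral> t. (\<Sum>m=1..r. (-1::real) ^ (m - 1) * real (r choose m) *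
                f (exp (real_of_int k / w) * (\<Prod>i<r. t i) powr (real m / real r)))
            * (\<Prod>i<r. 1 / t i)
       \<partial>(PiM {..<r} (\<lambda>_. restrict_space lborel {1..exp (1 / w)})))"

definition E_op :: "(real \<Rightarrow> real) \<Rightarrow> real \<Rightarrow> nat \<Rightarrow> (real \<Rightarrow> real) \<Rightarrow> real \<Rightarrow> real" where
  "E_op K w r f x = (\<Sum>\<^sub>\<infinity> k::int. K (exp (- real_of_int k) * x powr w) * E_inner f w r k)"

definition Lp_mellin_pow :: "real \<Rightarrow> (real \<Rightarrow> real) \<Rightarrow> ennreal" where
  "Lp_mellin_pow p g = (\<integral>\<^sup>+ x\<in>{0<..}. ennreal (\<bar>g x\<bar> powr p / x) \<partial>lborel)"

(* ||g||_p (meaningful when Lp_mellin_pow p g < \<infinity>) *)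
definition Lp_mellin_norm :: "real \<Rightarrow> (real \<Rightarrow> real) \<Rightarrow> real" where
  "Lp_mellin_norm p g = enn2real (Lp_mellin_pow p g) powr (1 / p)"

definition CB_comp :: "(real \<Rightarrow> real) \<Rightarrow> bool" where
  "CB_comp f \<longleftrightarrow> continuous_on {0<..} f \<and> bounded (f ` {0<..}) \<and>
     (\<exists>a b. 0 < a \<and> a \<le> b \<and> (\<forall>x>0. x \<notin> {a..b} \<longrightarrow> f x = 0))"

end

theory Submission
  imports Defs
begin

(* In the logarithmic variable s = ln x, E_inner f w r k only samples f \<circ> exp on
   [k/w, (k + r)/w]; its weights (-1)^(m-1) (r choose m) sum to 1 and have absolute sum
   at most 2^r, so E_inner f w r k is within 2^r \<omega>(f \<circ> exp, (r + \<gamma>)/w) of f x whenever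
   |k - w ln x| \<le> \<gamma>. The kernel is a partition of unity whose mass outside |k - w ln x| \<le> \<gamma>
   is uniformly small, hence E_op K w r f \<rightarrow> f uniformly on (0, \<infinity>).
   For the Mellin L^1 norm, the uniform bound handles a neighbourhood of the support in
   logarithmic scale; away from it only the O(w) indices k whose windows meet the support
   contribute, each by a log-scale kernel tail of integral O(1/w), which is small.
   Finally |g|^p \<le> |g| once |g| \<le> 1, so L^p follows from L^1 and uniform convergence. *)

section \<open>Mellin integrals\<close>

lemma nn_integral_mellin_eq_exp:
  fixes g :: "real \<Rightarrow> real"
  assumes [measurable]: "g \<in> borel_measurable borel" and nonneg: "\<And>x. g x \<ge> 0"
  shows "(\<integral>\<^sup>+x\<in>{0<..}. ennreal (g x / x) \<partial>lborel) = (\<integral>\<^sup>+s. ennreal (g (exp s)) \<partial>lborel)"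
proof -
  define A where "A = (\<lambda>n::nat. {exp (- real n)..exp (real n)})"
  define B where "B = (\<lambda>n::nat. {- real n..real n})"
  have UA: "(\<Union>n. A n) = {0<..}"
  proof (intro equalityI subsetI)
    fix x :: real assume "x \<in> {0<..}"
    moreover obtain n :: nat where "\<bar>ln x\<bar> \<le> real n" using real_arch_simple by blast
    ultimately have "exp (- real n) \<le> exp (ln x)" "exp (ln x) \<le> exp (real n)" "x > 0"
      by (auto simp del: exp_ln)
    then show "x \<in> (\<Union>n. A n)" by (auto simp: A_def)
  qed (auto simp: A_def intro: less_le_trans[OF exp_gt_zero])
  have UB: "(\<Union>n. B n) = UNIV"
  proof (intro equalityI subsetI)
    fix s :: real
    obtain n :: nat where "\<bar>s\<bar> \<le> real n" using real_arch_simple by blast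
    then have "s \<in> B n" by (auto simp: B_def)
    then show "s \<in> (\<Union>n. B n)" by blast
  qed auto
  have "incseq A" "incseq B" unfolding A_def B_def incseq_def by auto
  have AB: "emeasure (density lborel (\<lambda>x. g x / x)) (A n) = emeasure (density lborel (\<lambda>s. g (exp s))) (B n)" for n
  proof -
    have "(\<integral>\<^sup>+x. (g x / x) * indicator {exp (- real n)..exp (real n)} x \<partial>lborel) =
          (\<integral>\<^sup>+x. (g (exp x) / exp x) * exp x * indicator {- real n..real n} x \<partial>lborel)"
      using nonneg by (intro nn_integral_substitution[where g = exp and g' = exp])
        (auto intro!: derivative_eq_intros continuous_intros simp: set_borel_measurable_def)
    then show ?thesis
      by (simp add: A_def B_def emeasure_density nn_integral_set_ennreal)
  qed
  have "(\<integral>\<^sup>+x\<in>{0<..}. ennreal (g x / x) \<partial>lborel) = emeasure (density lborel (\<lambda>x. g x / x)) (\<Union>n. A n)"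
    by (simp add: UA emeasure_density)
  also have "\<dots> = (SUP n. emeasure (density lborel (\<lambda>x. g x / x)) (A n))"
    using \<open>incseq A\<close> by (intro SUP_emeasure_incseq[symmetric]) (auto simp: A_def)
  also have "\<dots> = (SUP n. emeasure (density lborel (\<lambda>s. g (exp s))) (B n))"
    by (simp add: AB)
  also have "\<dots> = emeasure (density lborel (\<lambda>s. g (exp s))) (\<Union>n. B n)"
    using \<open>incseq B\<close> by (intro SUP_emeasure_incseq) (auto simp: B_def)
  also have "\<dots> = (\<integral>\<^sup>+s. ennreal (g (exp s)) \<partial>lborel)"
    by (simp add: UB emeasure_density)
  finally show ?thesis .
qed

lemma Lp_mellin_pow_le_Lp_mellin_pow_1:
  assumes "p \<ge> 1" and "\<And>x. x > 0 \<Longrightarrow> \<bar>g x\<bar> \<le> 1"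
  shows "Lp_mellin_pow p g \<le> Lp_mellin_pow 1 g"
  unfolding Lp_mellin_pow_def
proof (intro nn_integral_mono)
  fix x :: real
  have "x > 0 \<Longrightarrow> \<bar>g x\<bar> powr p \<le> \<bar>g x\<bar> powr 1"
    using assms by (intro powr_mono') auto
  then show "ennreal (\<bar>g x\<bar> powr p / x) * indicator {0<..} x \<le> ennreal (\<bar>g x\<bar> powr 1 / x) * indicator {0<..} x"
    by (auto intro!: ennreal_leI divide_right_mono split: split_indicator)
qed

lemma Lp_mellin_norm_tendsto_0:
  assumes "p > 0" and small: "\<And>\<theta>. \<theta> > 0 \<Longrightarrow> eventually (\<lambda>w. Lp_mellin_pow p (g w) \<le> ennreal \<theta>) F"
  shows "eventually (\<lambda>w. Lp_mellin_pow p (g w) < \<infinity>) F \<and> ((\<lambda>w. Lp_mellin_norm p (g w)) \<longlongrightarrow> 0) F"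
proof
  show "eventually (\<lambda>w. Lp_mellin_pow p (g w) < \<infinity>) F"
    using small[OF zero_less_one] by (rule eventually_mono) (erule le_less_trans, simp)
  have "((\<lambda>w. enn2real (Lp_mellin_pow p (g w))) \<longlongrightarrow> 0) F"
  proof (rule order_tendstoI)
    fix e :: real assume "e > 0"
    have "eventually (\<lambda>w. Lp_mellin_pow p (g w) \<le> ennreal (e / 2)) F"
      using \<open>e > 0\<close> by (intro small) simp
    then show "eventually (\<lambda>w. enn2real (Lp_mellin_pow p (g w)) < e) F"
    proof (rule eventually_mono)
      fix w assume "Lp_mellin_pow p (g w) \<le> ennreal (e / 2)"
      then have "enn2real (Lp_mellin_pow p (g w)) \<le> e / 2" using \<open>e > 0\<close> by (intro enn2real_leI) auto
      then show "enn2real (Lp_mellin_pow p (g w)) < e" using \<open>e > 0\<close> by linarith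
    qed
  next
    fix e :: real assume "e < 0"
    then show "eventually (\<lambda>w. e < enn2real (Lp_mellin_pow p (g w))) F"
      by (intro always_eventually allI order_less_le_trans[OF _ enn2real_nonneg])
  qed
  then show "((\<lambda>w. Lp_mellin_norm p (g w)) \<longlongrightarrow> 0) F"
    unfolding Lp_mellin_norm_def by (rule tendsto_zero_powrI[OF _ tendsto_const]) (use \<open>p > 0\<close> in auto)
qed

section \<open>The inner averages\<close>

definition cube_measure :: "real \<Rightarrow> nat \<Rightarrow> (nat \<Rightarrow> real) measure" where
  "cube_measure w r = PiM {..<r} (\<lambda>_. restrict_space lborel {1..exp (1 / w)})"

lemma space_cube_measure:
  "space (cube_measure w r) = PiE {..<r} (\<lambda>_. {1..exp (1 / w)})"
  by (simp add: cube_measure_def space_PiM)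

lemma measurable_cube_component:
  "i < r \<Longrightarrow> (\<lambda>t. t i) \<in> borel_measurable (cube_measure w r)"
  unfolding cube_measure_def
  by (rule measurable_compose[OF measurable_component_singleton, where g = "\<lambda>x. x"])
    (auto intro!: measurable_restrict_space1)

lemma integral_inverse_Icc:
  assumes "1 \<le> c"
  shows "integrable (restrict_space lborel {1..c}) (\<lambda>x::real. 1 / x)"
    and "(\<integral>x. 1 / x \<partial>restrict_space lborel {1..c}) = ln c"
proof -
  have int: "set_integrable lborel {1..c} (\<lambda>x::real. 1 / x)"
    unfolding set_integrable_def by (intro borel_integrable_compact continuous_intros) auto
  then show "integrable (restrict_space lborel {1..c}) (\<lambda>x::real. 1 / x)"
    by (simp add: integrable_restrict_space set_integrable_def)
  have "((\<lambda>x::real. 1 / x) has_integral (ln c - ln 1)) {1..c}"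
    using assms by (intro fundamental_theorem_of_calculus)
      (auto intro!: derivative_eq_intros simp: has_real_derivative_iff_has_vector_derivative[symmetric])
  then show "(\<integral>x. 1 / x \<partial>restrict_space lborel {1..c}) = ln c"
    using set_borel_integral_eq_integral(2)[OF int]
    by (simp add: integral_restrict_space set_lebesgue_integral_def integral_unique)
qed

lemma
  assumes "w > 0"
  shows integrable_cube_weight: "integrable (cube_measure w r) (\<lambda>t. \<Prod>i<r. 1 / t i)"
    and integral_cube_weight: "(\<integral>t. (\<Prod>i<r. 1 / t i) \<partial>cube_measure w r) = (1 / w) ^ r"
proof -
  interpret product_sigma_finite "\<lambda>_::nat. restrict_space lborel {1..exp (1 / w)}"
    by (auto simp: product_sigma_finite_def intro!: sigma_finite_measure_restrict_space lborel.sigma_finite_measure_axioms)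
  have "1 \<le> exp (1 / w)" using assms by simp
  note inv = integral_inverse_Icc[OF this]
  show "integrable (cube_measure w r) (\<lambda>t. \<Prod>i<r. 1 / t i)"
    unfolding cube_measure_def using inv by (intro product_integrable_prod) auto
  show "(\<integral>t. (\<Prod>i<r. 1 / t i) \<partial>cube_measure w r) = (1 / w) ^ r"
    unfolding cube_measure_def using inv by (subst product_integral_prod) auto
qed

lemma cube_average_close:
  fixes h :: "(nat \<Rightarrow> real) \<Rightarrow> real"
  assumes w: "w > 0" and [measurable]: "h \<in> borel_measurable (cube_measure w r)"
    and close: "\<And>t. t \<in> space (cube_measure w r) \<Longrightarrow> \<bar>h t - v\<bar> \<le> \<eta>"
  shows "\<bar>w ^ r * (\<integral>t. h t * (\<Prod>i<r. 1 / t i) \<partial>cube_measure w r) - v\<bar> \<le> \<eta>"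
proof -
  define \<rho> where "\<rho> = (\<lambda>t::nat \<Rightarrow> real. \<Prod>i<r. 1 / t i)"
  have \<rho>_pos: "0 < \<rho> t" if "t \<in> space (cube_measure w r)" for t
    using that unfolding \<rho>_def space_cube_measure
    by (intro prod_pos) (auto simp: PiE_def Pi_def intro: less_le_trans[OF zero_less_one])
  note measurable_cube_component[measurable]
  have [measurable]: "\<rho> \<in> borel_measurable (cube_measure w r)" unfolding \<rho>_def by measurable
  have \<rho>_int: "integrable (cube_measure w r) \<rho>" and \<rho>_mass: "(\<integral>t. \<rho> t \<partial>cube_measure w r) = (1 / w) ^ r"
    using integrable_cube_weight[OF w] integral_cube_weight[OF w] by (simp_all add: \<rho>_def)
  have bound: "\<bar>(h t - v) * \<rho> t\<bar> \<le> \<rho> t * \<eta>" if "t \<in> space (cube_measure w r)" for t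
    using close[OF that] \<rho>_pos[OF that] by (simp add: abs_mult)
  have int: "integrable (cube_measure w r) (\<lambda>t. (h t - v) * \<rho> t)"
    using bound by (intro Bochner_Integration.integrable_bound[OF integrable_mult_left[OF \<rho>_int, of \<eta>]])
      (auto intro!: AE_I2 order_trans[OF _ abs_ge_self])
  have "(\<integral>t. h t * \<rho> t \<partial>cube_measure w r) = (\<integral>t. (h t - v) * \<rho> t + v * \<rho> t \<partial>cube_measure w r)"
    by (simp add: algebra_simps)
  also have "\<dots> = (\<integral>t. (h t - v) * \<rho> t \<partial>cube_measure w r) + v * (1 / w) ^ r"
    using int \<rho>_int \<rho>_mass by simp
  finally have eq: "w ^ r * (\<integral>t. h t * \<rho> t \<partial>cube_measure w r) - v = w ^ r * (\<integral>t. (h t - v) * \<rho> t \<partial>cube_measure w r)"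
    using w by (simp add: algebra_simps power_divide)
  have "\<bar>w ^ r * (\<integral>t. h t * \<rho> t \<partial>cube_measure w r) - v\<bar>
      = w ^ r * \<bar>\<integral>t. (h t - v) * \<rho> t \<partial>cube_measure w r\<bar>"
    using w by (simp add: eq abs_mult)
  also have "\<dots> \<le> w ^ r * (\<integral>t. \<rho> t * \<eta> \<partial>cube_measure w r)"
    using w int \<rho>_int bound
    by (intro mult_left_mono order_trans[OF integral_abs_bound] integral_mono) auto
  also have "\<dots> = \<eta>" using w \<rho>_mass by (simp add: power_divide)
  finally show ?thesis by (simp add: \<rho>_def)
qed

lemma sum_alternating_binomial_from_1:
  assumes "r \<ge> 1"
  shows "(\<Sum>m=1..r. (-1) ^ (m - 1) * real (r choose m)) = 1"
proof -
  have "(\<Sum>m\<le>r. (-1) ^ m * real (r choose m)) = 0"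
    using choose_alternating_sum[of r] assms by simp
  moreover have "(\<Sum>m\<le>r. (-1) ^ m * real (r choose m)) = 1 + (\<Sum>m=1..r. (-1) ^ m * real (r choose m))"
    by (simp add: atMost_atLeast0 sum.atLeast_Suc_atMost)
  moreover have "(\<Sum>m=1..r. (-1) ^ (m - 1) * real (r choose m)) = - (\<Sum>m=1..r. (-1) ^ m * real (r choose m))"
    unfolding sum_negf[symmetric] by (intro sum.cong refl) (auto simp: power_eq_if)
  ultimately show ?thesis by linarith
qed

lemma binomial_combination_close:
  fixes g :: "nat \<Rightarrow> real"
  assumes "r \<ge> 1" and close: "\<And>m. m \<in> {1..r} \<Longrightarrow> \<bar>g m - v\<bar> \<le> \<eta>"
  shows "\<bar>(\<Sum>m=1..r. (-1) ^ (m - 1) * real (r choose m) * g m) - v\<bar> \<le> 2 ^ r * \<eta>"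
proof -
  have "\<eta> \<ge> 0" using close[of 1] assms(1) by force
  have "(\<Sum>m=1..r. (-1) ^ (m - 1) * real (r choose m) * g m) - v
      = (\<Sum>m=1..r. (-1) ^ (m - 1) * real (r choose m) * (g m - v))"
    using sum_alternating_binomial_from_1[OF assms(1)]
    by (simp add: right_diff_distrib sum_subtractf sum_distrib_right[symmetric])
  also have "\<bar>\<dots>\<bar> \<le> (\<Sum>m=1..r. real (r choose m) * \<eta>)"
    using close by (intro order_trans[OF sum_abs] sum_mono) (simp add: abs_mult mult_left_mono)
  also have "\<dots> \<le> (\<Sum>m\<le>r. real (r choose m)) * \<eta>"
    using \<open>\<eta> \<ge> 0\<close> by (simp add: sum_distrib_right[symmetric] mult_right_mono sum_mono2)
  also have "\<dots> = 2 ^ r * \<eta>"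
    by (simp flip: of_nat_sum add: choose_row_sum)
  finally show ?thesis .
qed

lemma sum_ln_cube_range:
  assumes "t \<in> space (cube_measure w r)"
  shows "0 \<le> (\<Sum>i<r. ln (t i))" and "(\<Sum>i<r. ln (t i)) \<le> r / w"
proof -
  have "0 \<le> ln (t i) \<and> ln (t i) \<le> 1 / w" if "i < r" for i
  proof -
    have "1 \<le> t i" "t i \<le> exp (1 / w)"
      using assms that by (auto simp: space_cube_measure PiE_def Pi_def)
    then show ?thesis using ln_le_cancel_iff[of "t i" "exp (1 / w)"] by simp
  qed
  then show "0 \<le> (\<Sum>i<r. ln (t i))" "(\<Sum>i<r. ln (t i)) \<le> r / w"
    using sum_mono[of "{..<r}" "\<lambda>i. ln (t i)" "\<lambda>_. 1 / w"] by (auto intro: sum_nonneg)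
qed

lemma E_inner_eq_cube_integral:
  "E_inner f w r k = w ^ r * (\<integral>t. (\<Sum>m=1..r. (-1) ^ (m - 1) * real (r choose m) *
      f (exp (k / w + m / r * (\<Sum>i<r. ln (t i))))) * (\<Prod>i<r. 1 / t i) \<partial>cube_measure w r)"
  unfolding E_inner_def cube_measure_def[symmetric]
proof (intro arg_cong[where f = "\<lambda>y. w ^ r * y"] Bochner_Integration.integral_cong refl)
  fix t assume "t \<in> space (cube_measure w r)"
  then have pos: "\<And>i. i \<in> {..<r} \<Longrightarrow> 0 < t i"
    by (auto simp: space_cube_measure PiE_def Pi_def intro: less_le_trans[OF zero_less_one])
  then have "0 < (\<Prod>i<r. t i)" by (rule prod_pos)
  moreover have "ln (\<Prod>i<r. t i) = (\<Sum>i<r. ln (t i))" using pos by (intro ln_prod) force+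
  ultimately have "(\<Prod>i<r. t i) powr (m / r) = exp (m / r * (\<Sum>i<r. ln (t i)))" for m :: nat
    by (simp add: powr_def del: prod_zero_iff)
  then show "(\<Sum>m=1..r. (-1) ^ (m - 1) * real (r choose m) *
        f (exp (k / w) * (\<Prod>i<r. t i) powr (m / r))) * (\<Prod>i<r. 1 / t i)
      = (\<Sum>m=1..r. (-1) ^ (m - 1) * real (r choose m) *
        f (exp (k / w + m / r * (\<Sum>i<r. ln (t i))))) * (\<Prod>i<r. 1 / t i)"
    by (simp add: exp_add)
qed

lemma E_inner_close:
  assumes w: "w > 0" and r: "r \<ge> 1"
    and meas: "(\<lambda>s. f (exp s)) \<in> borel_measurable borel"
    and close: "\<And>s. real_of_int k / w \<le> s \<Longrightarrow> s \<le> (real_of_int k + real r) / w \<Longrightarrow> \<bar>f (exp s) - v\<bar> \<le> \<eta>"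
  shows "\<bar>E_inner f w r k - v\<bar> \<le> 2 ^ r * \<eta>"
  unfolding E_inner_eq_cube_integral
proof (rule cube_average_close[OF w])
  define F where "F = (\<lambda>s. f (exp s))"
  have [measurable]: "F \<in> borel_measurable borel" using meas by (simp add: F_def)
  note measurable_cube_component[measurable]
  have "(\<lambda>t. \<Sum>m=1..r. (-1) ^ (m - 1) * real (r choose m) * F (k / w + m / r * (\<Sum>i<r. ln (t i))))
      \<in> borel_measurable (cube_measure w r)"
    by measurable
  then show "(\<lambda>t. \<Sum>m=1..r. (-1) ^ (m - 1) * real (r choose m) * f (exp (k / w + m / r * (\<Sum>i<r. ln (t i)))))
      \<in> borel_measurable (cube_measure w r)"
    by (simp add: F_def)
  fix t assume t: "t \<in> space (cube_measure w r)"
  show "\<bar>(\<Sum>m=1..r. (-1) ^ (m - 1) * real (r choose m) * f (exp (k / w + m / r * (\<Sum>i<r. ln (t i))))) - v\<bar>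
      \<le> 2 ^ r * \<eta>"
  proof (intro binomial_combination_close[OF r])
    fix m assume "m \<in> {1..r}"
    then have "0 \<le> m / r" "m / r \<le> 1" by auto
    then have "m / r * (\<Sum>i<r. ln (t i)) \<le> 1 * (r / w)" "0 \<le> m / r * (\<Sum>i<r. ln (t i))"
      using sum_ln_cube_range[OF t] by (intro mult_mono mult_nonneg_nonneg; simp)+
    then show "\<bar>f (exp (k / w + m / r * (\<Sum>i<r. ln (t i)))) - v\<bar> \<le> \<eta>"
      using w by (intro close) (auto simp: add_divide_distrib)
  qed
qed

lemma E_inner_bound:
  assumes "w > 0" "r \<ge> 1" "(\<lambda>s. f (exp s)) \<in> borel_measurable borel"
    and "\<And>x. x > 0 \<Longrightarrow> \<bar>f x\<bar> \<le> B"
  shows "\<bar>E_inner f w r k\<bar> \<le> 2 ^ r * B"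
  using E_inner_close[OF assms(1-3), of k 0 B] assms(4) by simp

lemma E_inner_near:
  assumes w: "w > 0" and r: "r \<ge> 1" and meas: "(\<lambda>s. f (exp s)) \<in> borel_measurable borel"
    and unif: "\<And>s s'. \<bar>s - s'\<bar> < \<delta> \<Longrightarrow> \<bar>f (exp s) - f (exp s')\<bar> \<le> \<eta>"
    and x: "x > 0" and near: "\<bar>real_of_int k - w * ln x\<bar> \<le> \<gamma>" and small: "(\<gamma> + r) / w < \<delta>"
  shows "\<bar>E_inner f w r k - f x\<bar> \<le> 2 ^ r * \<eta>"
proof (rule E_inner_close[OF w r meas])
  fix s assume s: "real_of_int k / w \<le> s" "s \<le> (real_of_int k + real r) / w"
  have "\<bar>s - ln x\<bar> \<le> \<bar>s - k / w\<bar> + \<bar>(k - w * ln x) / w\<bar>"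
    using w by (simp add: diff_divide_distrib abs_triangle_ineq[THEN order_trans[rotated]])
  also have "\<dots> \<le> r / w + \<gamma> / w"
    using s near w by (intro add_mono) (auto simp: abs_divide divide_right_mono add_divide_distrib)
  finally have "\<bar>s - ln x\<bar> < \<delta>" using small by (simp add: add_divide_distrib)
  then show "\<bar>f (exp s) - f x\<bar> \<le> \<eta>" using unif[of s "ln x"] x by simp
qed

section \<open>Compactly supported functions\<close>

(* The indices k whose sampling interval [k/w, (k + r)/w] meets [ln a, ln b]. *)
definition window :: "real \<Rightarrow> real \<Rightarrow> nat \<Rightarrow> real \<Rightarrow> int set" where
  "window a b r w = {\<lceil>w * ln a\<rceil> - int r..\<lfloor>w * ln b\<rfloor>}"

lemma finite_window [simp]: "finite (window a b r w)"
  by (simp add: window_def)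

lemma card_window_le:
  assumes "w \<ge> 1" "0 < a" "a \<le> b"
  shows "real (card (window a b r w)) \<le> w * (ln b - ln a + r + 1)"
proof -
  have "w * ln a \<le> w * ln b" using assms by (intro mult_left_mono) auto
  then have "real (card (window a b r w)) \<le> w * ln b - w * ln a + r + 1"
    unfolding window_def by (cases "\<lceil>w * ln a\<rceil> - int r \<le> \<lfloor>w * ln b\<rfloor>") (auto, linarith+)
  also have "\<dots> \<le> w * (ln b - ln a + r + 1)"
    using mult_left_mono[OF assms(1), of "r + 1"] by (simp add: algebra_simps)
  finally show ?thesis .
qed

locale compact_support_fun =
  fixes f :: "real \<Rightarrow> real" and a b B :: real
  assumes continuous: "continuous_on {0<..} f"
    and bounded: "\<And>x. x > 0 \<Longrightarrow> \<bar>f x\<bar> \<le> B"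
    and support: "0 < a" "a \<le> b" "\<And>x. x > 0 \<Longrightarrow> x \<notin> {a..b} \<Longrightarrow> f x = 0"
begin

lemma vanishes_outside_log:
  assumes "s < ln a \<or> s > ln b"
  shows "f (exp s) = 0"
proof (rule support(3))
  have "exp s < exp (ln a) \<or> exp (ln b) < exp s" using assms by simp
  then show "exp s \<notin> {a..b}" using support(1,2) by auto
qed simp

lemma continuous_on_exp: "continuous_on UNIV (\<lambda>s. f (exp s))"
  by (rule continuous_on_compose2[OF continuous]) (auto intro!: continuous_intros)

lemma measurable_exp [measurable]: "(\<lambda>s. f (exp s)) \<in> borel_measurable borel"
  by (rule borel_measurable_continuous_onI[OF continuous_on_exp])

text \<open>Heine--Cantor on a compact neighbourhood of \<open>[ln a, ln b]\<close>; far from it both values vanish.\<close>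

lemma uniformly_continuous_on_exp: "uniformly_continuous_on UNIV (\<lambda>s. f (exp s))"
proof (unfold uniformly_continuous_on_def, intro allI impI)
  fix \<eta> :: real assume "\<eta> > 0"
  define J where "J = {ln a - 1..ln b + 1}"
  have "uniformly_continuous_on J (\<lambda>s. f (exp s))"
    by (rule compact_uniformly_continuous[OF continuous_on_subset[OF continuous_on_exp]]) (auto simp: J_def)
  then obtain d where "d > 0" and d: "\<And>s s'. s \<in> J \<Longrightarrow> s' \<in> J \<Longrightarrow> dist s' s < d \<Longrightarrow> dist (f (exp s')) (f (exp s)) < \<eta>"
    unfolding uniformly_continuous_on_def using \<open>\<eta> > 0\<close> by metis
  have "dist (f (exp s')) (f (exp s)) < \<eta>" if "dist s' s < min d 1" for s s'
  proof (cases "s \<in> J \<and> s' \<in> J")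
    case True
    then show ?thesis using d that by simp
  next
    case False
    with that have "(s < ln a \<or> s > ln b) \<and> (s' < ln a \<or> s' > ln b)"
      by (auto simp: J_def dist_real_def)
    then show ?thesis using vanishes_outside_log \<open>\<eta> > 0\<close> by simp
  qed
  moreover have "min d 1 > 0" using \<open>d > 0\<close> by simp
  ultimately show "\<exists>d>0. \<forall>s\<in>UNIV. \<forall>s'\<in>UNIV. dist s' s < d \<longrightarrow> dist (f (exp s')) (f (exp s)) < \<eta>"
    by blast
qed

lemma E_inner_eq_0:
  assumes w: "w > 0" and r: "r \<ge> 1" and k: "k \<notin> window a b r w"
  shows "E_inner f w r k = 0"
proof -
  have "\<bar>E_inner f w r k - 0\<bar> \<le> 2 ^ r * 0"
  proof (rule E_inner_close[OF w r measurable_exp])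
    fix s assume s: "real_of_int k / w \<le> s" "s \<le> (real_of_int k + real r) / w"
    from k consider "real_of_int k > w * ln b" | "real_of_int k + r < w * ln a"
      unfolding window_def by (auto, linarith+)
    then have "s < ln a \<or> s > ln b"
    proof cases
      case 1
      then have "ln b < k / w" using w by (simp add: field_simps)
      then show ?thesis using s by simp
    next
      case 2
      then have "(k + r) / w < ln a" using w by (simp add: field_simps)
      then show ?thesis using s by simp
    qed
    then show "\<bar>f (exp s) - 0\<bar> \<le> 0" using vanishes_outside_log by simp
  qed
  then show ?thesis by simp
qed

lemma E_op_eq_sum_window:
  assumes "w > 0" "r \<ge> 1"
  shows "E_op K w r f x = (\<Sum>k\<in>window a b r w. K (exp (- real_of_int k) * x powr w) * E_inner f w r k)"
proof -
  have "E_op K w r f x = (\<Sum>\<^sub>\<infinity>k\<in>window a b r w. K (exp (- real_of_int k) * x powr w) * E_inner f w r k)"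
    unfolding E_op_def by (rule infsum_cong_neutral) (auto simp: E_inner_eq_0[OF assms])
  then show ?thesis by simp
qed

lemma abs_E_op_le_window_tail:
  assumes w: "w > 0" and r: "r \<ge> 1" and wR: "R + r \<le> w"
    and x: "x > 0" and far: "ln x \<notin> {ln a - 1..ln b + 1}"
  shows "\<bar>E_op K w r f x\<bar> \<le> 2 ^ r * B *
    (\<Sum>k\<in>window a b r w. \<bar>K (exp (w * ln x - k))\<bar> * indicator {s. R \<le> \<bar>s\<bar>} (w * ln x - k))"
proof -
  have exp_eq: "exp (- real_of_int k) * x powr w = exp (w * ln x - k)" for k
    using x by (simp add: powr_def exp_diff exp_minus field_simps)
  have tail: "R \<le> \<bar>w * ln x - k\<bar>" if "k \<in> window a b r w" for k
  proof -
    have k: "k \<le> w * ln b" "w * ln a - r \<le> k" using that unfolding window_def by (auto, linarith+)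
    from far consider "ln x > ln b + 1" | "ln x < ln a - 1" by auto
    then show ?thesis
    proof cases
      case 1
      then have "w * 1 \<le> w * (ln x - ln b)" using w by (intro mult_left_mono) auto
      then show ?thesis using k wR by (simp add: algebra_simps)
    next
      case 2
      then have "w * 1 \<le> w * (ln a - ln x)" using w by (intro mult_left_mono) auto
      then show ?thesis using k wR by (simp add: algebra_simps)
    qed
  qed
  have "\<bar>E_op K w r f x\<bar> \<le> (\<Sum>k\<in>window a b r w. \<bar>K (exp (- real_of_int k) * x powr w)\<bar> * \<bar>E_inner f w r k\<bar>)"
    unfolding E_op_eq_sum_window[OF w r] abs_mult[symmetric] by (rule sum_abs)
  also have "\<dots> \<le> (\<Sum>k\<in>window a b r w. 2 ^ r * B * (\<bar>K (exp (w * ln x - k))\<bar> * indicator {s. R \<le> \<bar>s\<bar>} (w * ln x - k)))"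
  proof (intro sum_mono)
    fix k assume "k \<in> window a b r w"
    have "\<bar>E_inner f w r k\<bar> \<le> 2 ^ r * B"
      using bounded by (rule E_inner_bound[OF w r measurable_exp])
    then have "\<bar>K (exp (w * ln x - k))\<bar> * \<bar>E_inner f w r k\<bar> \<le> \<bar>K (exp (w * ln x - k))\<bar> * (2 ^ r * B)"
      by (intro mult_left_mono) auto
    then show "\<bar>K (exp (- real_of_int k) * x powr w)\<bar> * \<bar>E_inner f w r k\<bar>
        \<le> 2 ^ r * B * (\<bar>K (exp (w * ln x - k))\<bar> * indicator {s. R \<le> \<bar>s\<bar>} (w * ln x - k))"
      using tail[OF \<open>k \<in> _\<close>] unfolding exp_eq by (simp add: mult_ac)
  qed
  finally show ?thesis unfolding sum_distrib_left .
qed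

lemma abs_E_op_diff_le_window_tail:
  assumes w: "w > 0" and r: "r \<ge> 1" and wR: "R + r \<le> w"
    and unif: "\<forall>x>0. \<bar>E_op K w r f x - f x\<bar> \<le> \<epsilon>" and x: "x > 0"
  shows "\<bar>E_op K w r f x - f x\<bar> \<le> \<epsilon> * indicator {ln a - 1..ln b + 1} (ln x) + 2 ^ r * B *
    (\<Sum>k\<in>window a b r w. \<bar>K (exp (w * ln x - k))\<bar> * indicator {s. R \<le> \<bar>s\<bar>} (w * ln x - k))"
proof (cases "ln x \<in> {ln a - 1..ln b + 1}")
  case True
  have "0 \<le> 2 ^ r * B" using bounded[of 1] by simp
  then show ?thesis
    using unif x True by (auto intro!: add_increasing2 mult_nonneg_nonneg sum_nonneg)
next
  case False
  have "x \<notin> {a..b}"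
  proof
    assume "x \<in> {a..b}"
    then have "ln a \<le> ln x" "ln x \<le> ln b" using x support(1) by auto
    with False show False by auto
  qed
  then have "f x = 0" using x support(3) by blast
  then show ?thesis using abs_E_op_le_window_tail[OF w r wR x False] False by simp
qed

end

lemma CB_compE:
  assumes "CB_comp f"
  obtains a b B where "compact_support_fun f a b B"
proof -
  from assms obtain a b where "continuous_on {0<..} f" "bounded (f ` {0<..})"
    and "0 < a" "a \<le> b" "\<And>x. x > 0 \<Longrightarrow> x \<notin> {a..b} \<Longrightarrow> f x = 0"
    unfolding CB_comp_def by blast
  moreover from \<open>bounded (f ` {0<..})\<close> obtain B where "\<And>x. x > 0 \<Longrightarrow> \<bar>f x\<bar> \<le> B"
    unfolding bounded_iff by auto
  ultimately have "compact_support_fun f a b B" by (simp add: compact_support_fun_def)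
  then show ?thesis by (rule that)
qed

section \<open>Kernels\<close>

definition kernel_log_tail :: "(real \<Rightarrow> real) \<Rightarrow> real \<Rightarrow> ennreal" where
  "kernel_log_tail K R = (\<integral>\<^sup>+s. ennreal (\<bar>K (exp s)\<bar> * indicator {s. R \<le> \<bar>s\<bar>} s) \<partial>lborel)"

locale mellin_kernel =
  fixes K :: "real \<Rightarrow> real"
  assumes kernel: "is_kernel K"
begin

lemma continuous_on_kernel: "continuous_on {0<..} K"
  and nn_integral_kernel_mellin_finite: "(\<integral>\<^sup>+x\<in>{0<..}. ennreal (\<bar>K x\<bar> / x) \<partial>lborel) < \<infinity>"
  and kernel_has_sum_one: "\<And>u. u > 0 \<Longrightarrow> ((\<lambda>k::int. K (exp (- real_of_int k) * u)) has_sum 1) UNIV"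
  and M0_finite: "M0 K < \<infinity>"
  and kernel_tail_small: "\<And>\<epsilon>. \<epsilon> > 0 \<Longrightarrow> \<exists>\<Gamma>. \<forall>\<gamma>\<ge>\<Gamma>. \<forall>u>0.
        (\<integral>\<^sup>+ k. ennreal \<bar>K (exp (- real_of_int k) * u)\<bar>
           \<partial>count_space {k::int. \<bar>real_of_int k - ln u\<bar> > \<gamma>}) < ennreal \<epsilon>"
  using kernel unfolding is_kernel_def by blast+

lemma nn_integral_kernel_le:
  assumes "u > 0"
  shows "(\<integral>\<^sup>+k. ennreal \<bar>K (exp (- real_of_int k) * u)\<bar> \<partial>count_space UNIV) \<le> ennreal (enn2real (M0 K))"
  using assms M0_finite unfolding M0_def by (subst ennreal_enn2real) (auto intro!: SUP_upper)

lemma integrable_kernel_mult: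
  assumes u: "u > 0" and c: "\<And>k. \<bar>c k\<bar> \<le> C"
  shows "integrable (count_space UNIV) (\<lambda>k::int. K (exp (- real_of_int k) * u) * c k)"
proof (rule integrableI_bounded)
  have "C \<ge> 0" using c[of 0] by linarith
  have "(\<integral>\<^sup>+k. ennreal (norm (K (exp (- real_of_int k) * u) * c k)) \<partial>count_space UNIV)
      \<le> (\<integral>\<^sup>+k. ennreal C * ennreal \<bar>K (exp (- real_of_int k) * u)\<bar> \<partial>count_space UNIV)"
    using c \<open>C \<ge> 0\<close> by (intro nn_integral_mono)
      (auto simp: abs_mult ennreal_mult[symmetric] mult.commute intro!: ennreal_leI mult_right_mono)
  also have "\<dots> \<le> ennreal C * ennreal (enn2real (M0 K))"
    using nn_integral_kernel_le[OF u] by (simp add: nn_integral_cmult mult_left_mono)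
  also have "\<dots> < \<infinity>" by (simp add: ennreal_mult_less_top)
  finally show "(\<integral>\<^sup>+k. ennreal (norm (K (exp (- real_of_int k) * u) * c k)) \<partial>count_space UNIV) < \<infinity>" .
qed simp

lemma infsum_kernel_eq_integral:
  assumes "u > 0" and "\<And>k. \<bar>c k\<bar> \<le> C"
  shows "(\<Sum>\<^sub>\<infinity>k. K (exp (- real_of_int k) * u) * c k) = (\<integral>k. K (exp (- real_of_int k) * u) * c k \<partial>count_space UNIV)"
  using integrable_kernel_mult[OF assms]
  by (subst infsetsum_infsum[symmetric]) (auto simp: abs_summable_on_def infsetsum_def)

lemma infsum_kernel_minus_eq_integral:
  assumes u: "u > 0" and bounded: "\<And>k. \<bar>c k - v\<bar> \<le> D"
  shows "(\<Sum>\<^sub>\<infinity>k. K (exp (- real_of_int k) * u) * c k) - v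
    = (\<integral>k. K (exp (- real_of_int k) * u) * (c k - v) \<partial>count_space UNIV)"
proof -
  have c_bounded: "\<bar>c k\<bar> \<le> \<bar>v\<bar> + D" for k using bounded[of k] by linarith
  have "1 = (\<Sum>\<^sub>\<infinity>k. K (exp (- real_of_int k) * u) * 1)"
    using infsumI[OF kernel_has_sum_one[OF u]] by simp
  also have "\<dots> = (\<integral>k. K (exp (- real_of_int k) * u) * 1 \<partial>count_space UNIV)"
    using u by (intro infsum_kernel_eq_integral[where C = 1]) auto
  finally have "(\<Sum>\<^sub>\<infinity>k. K (exp (- real_of_int k) * u) * c k) - v
      = (\<integral>k. K (exp (- real_of_int k) * u) * c k \<partial>count_space UNIV)
        - (\<integral>k. K (exp (- real_of_int k) * u) * 1 \<partial>count_space UNIV) * v"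
    using infsum_kernel_eq_integral[OF u c_bounded] by simp
  also have "\<dots> = (\<integral>k. K (exp (- real_of_int k) * u) * (c k - v) \<partial>count_space UNIV)"
    using integrable_kernel_mult[OF u c_bounded] integrable_kernel_mult[OF u, of "\<lambda>_. v" "\<bar>v\<bar>"]
    by (simp add: right_diff_distrib mult.assoc)
  finally show ?thesis .
qed

lemma kernel_series_close:
  assumes u: "u > 0"
    and bounded: "\<And>k. \<bar>c k - v\<bar> \<le> D"
    and near: "\<And>k. \<bar>real_of_int k - ln u\<bar> \<le> \<gamma> \<Longrightarrow> \<bar>c k - v\<bar> \<le> \<eta>" and "\<eta> \<ge> 0"
    and tail: "(\<integral>\<^sup>+ k. ennreal \<bar>K (exp (- real_of_int k) * u)\<bar>
                 \<partial>count_space {k::int. \<bar>real_of_int k - ln u\<bar> > \<gamma>}) < ennreal \<tau>"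
  shows "\<bar>(\<Sum>\<^sub>\<infinity>k. K (exp (- real_of_int k) * u) * c k) - v\<bar> \<le> \<eta> * enn2real (M0 K) + D * \<tau>"
proof -
  define a where "a k = \<bar>K (exp (- real_of_int k) * u)\<bar>" for k :: int
  define far where "far = {k::int. \<bar>real_of_int k - ln u\<bar> > \<gamma>}"
  have "D \<ge> 0" using bounded[of 0] by linarith
  have "\<tau> > 0" using tail by (auto intro: ccontr simp: ennreal_neg)
  have int: "integrable (count_space UNIV) (\<lambda>k::int. K (exp (- real_of_int k) * u) * (c k - v))"
    using bounded by (intro integrable_kernel_mult[OF u])
  have "ennreal \<bar>(\<Sum>\<^sub>\<infinity>k. K (exp (- real_of_int k) * u) * c k) - v\<bar>
      \<le> (\<integral>\<^sup>+k. ennreal (a k * \<bar>c k - v\<bar>) \<partial>count_space UNIV)"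
    using integral_norm_bound_ennreal[OF int]
    by (simp add: infsum_kernel_minus_eq_integral[OF u bounded] a_def abs_mult)
  also have "\<dots> \<le> (\<integral>\<^sup>+k. ennreal \<eta> * ennreal (a k) + ennreal D * (ennreal (a k) * indicator far k) \<partial>count_space UNIV)"
  proof (intro nn_integral_mono)
    fix k
    have "a k \<ge> 0" by (simp add: a_def)
    have "a k * \<bar>c k - v\<bar> \<le> a k * (if k \<in> far then D else \<eta>)"
      using near[of k] bounded[of k] by (intro mult_left_mono) (auto simp: far_def a_def)
    also have "\<dots> \<le> \<eta> * a k + D * (a k * indicator far k)"
      using \<open>a k \<ge> 0\<close> \<open>\<eta> \<ge> 0\<close> by (simp add: mult.commute)
    finally have "a k * \<bar>c k - v\<bar> \<le> \<eta> * a k + D * (a k * indicator far k)" .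
    then show "ennreal (a k * \<bar>c k - v\<bar>) \<le> ennreal \<eta> * ennreal (a k) + ennreal D * (ennreal (a k) * indicator far k)"
      using \<open>\<eta> \<ge> 0\<close> \<open>D \<ge> 0\<close>
      by (auto simp: a_def ennreal_mult'[symmetric] ennreal_plus[symmetric] intro!: ennreal_leI
          simp del: ennreal_plus split: split_indicator)
  qed
  also have "\<dots> = ennreal \<eta> * (\<integral>\<^sup>+k. ennreal (a k) \<partial>count_space UNIV) + ennreal D * (\<integral>\<^sup>+k. ennreal (a k) \<partial>count_space far)"
    by (subst nn_integral_add) (auto simp: nn_integral_cmult nn_integral_count_space_indicator)
  also have "\<dots> \<le> ennreal \<eta> * ennreal (enn2real (M0 K)) + ennreal D * ennreal \<tau>"
    using nn_integral_kernel_le[OF u] tail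
    by (intro add_mono mult_left_mono) (auto simp: a_def far_def)
  also have "\<dots> = ennreal (\<eta> * enn2real (M0 K) + D * \<tau>)"
    using \<open>\<eta> \<ge> 0\<close> \<open>D \<ge> 0\<close> \<open>\<tau> > 0\<close> by (simp add: ennreal_mult ennreal_plus)
  finally show ?thesis
    using \<open>\<eta> \<ge> 0\<close> \<open>D \<ge> 0\<close> \<open>\<tau> > 0\<close>
    by (simp add: ennreal_plus[symmetric] ennreal_le_iff del: ennreal_plus)
qed

lemma abs_E_op_diff_le_modulus:
  assumes r: "r \<ge> 1" and bound: "\<And>x. x > 0 \<Longrightarrow> \<bar>f x\<bar> \<le> B"
    and meas: "(\<lambda>s. f (exp s)) \<in> borel_measurable borel"
    and modulus: "\<And>s s'. \<bar>s - s'\<bar> < \<delta> \<Longrightarrow> \<bar>f (exp s) - f (exp s')\<bar> \<le> \<eta>" and "\<eta> \<ge> 0"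
    and w: "w > 0" and small: "(\<gamma> + r) / w < \<delta>" and x: "x > 0"
    and tail: "(\<integral>\<^sup>+ k. ennreal \<bar>K (exp (- real_of_int k) * x powr w)\<bar>
                 \<partial>count_space {k::int. \<bar>real_of_int k - ln (x powr w)\<bar> > \<gamma>}) < ennreal \<tau>"
  shows "\<bar>E_op K w r f x - f x\<bar> \<le> 2 ^ r * \<eta> * enn2real (M0 K) + (2 ^ r * B + B) * \<tau>"
  unfolding E_op_def
proof (rule kernel_series_close[OF _ _ _ _ tail])
  show "\<bar>E_inner f w r k - f x\<bar> \<le> 2 ^ r * B + B" for k
  proof -
    have "\<bar>E_inner f w r k\<bar> \<le> 2 ^ r * B" using bound by (intro E_inner_bound[OF w r meas])
    then show ?thesis using bound[OF x] abs_triangle_ineq4[of "E_inner f w r k" "f x"] by linarith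
  qed
  show "\<bar>E_inner f w r k - f x\<bar> \<le> 2 ^ r * \<eta>" if "\<bar>real_of_int k - ln (x powr w)\<bar> \<le> \<gamma>" for k
    using E_inner_near[OF w r meas modulus x _ small] that x by (simp add: ln_powr)
qed (use x \<open>\<eta> \<ge> 0\<close> in auto)

theorem E_op_uniform_convergence:
  assumes r: "r \<ge> 1" and bound: "\<And>x. x > 0 \<Longrightarrow> \<bar>f x\<bar> \<le> B"
    and uc: "uniformly_continuous_on UNIV (\<lambda>s. f (exp s))" and "\<epsilon> > 0"
  shows "eventually (\<lambda>w. \<forall>x>0. \<bar>E_op K w r f x - f x\<bar> \<le> \<epsilon>) at_top"
proof -
  have meas: "(\<lambda>s. f (exp s)) \<in> borel_measurable borel"
    using uc by (intro borel_measurable_continuous_onI uniformly_continuous_imp_continuous)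
  define M where "M = enn2real (M0 K)"
  define D where "D = 2 ^ r * B + B"
  have "M \<ge> 0" "B \<ge> 0" using bound[of 1] by (auto simp: M_def)
  then have "D \<ge> 0" by (simp add: D_def)
  define \<tau> where "\<tau> = \<epsilon> / (2 * (D + 1))"
  have "\<tau> > 0" using \<open>\<epsilon> > 0\<close> \<open>D \<ge> 0\<close> by (simp add: \<tau>_def)
  then obtain \<Gamma> where \<Gamma>: "\<And>\<gamma> u. \<gamma> \<ge> \<Gamma> \<Longrightarrow> u > 0 \<Longrightarrow> (\<integral>\<^sup>+ k. ennreal \<bar>K (exp (- real_of_int k) * u)\<bar>
      \<partial>count_space {k::int. \<bar>real_of_int k - ln u\<bar> > \<gamma>}) < ennreal \<tau>"
    using kernel_tail_small by blast
  define \<gamma> where "\<gamma> = max \<Gamma> 0"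
  define \<eta> where "\<eta> = \<epsilon> / (2 * 2 ^ r * (M + 1))"
  have "\<eta> > 0" using \<open>\<epsilon> > 0\<close> \<open>M \<ge> 0\<close> by (simp add: \<eta>_def)
  then obtain \<delta> where "\<delta> > 0" and \<delta>: "\<And>s s'. \<bar>s - s'\<bar> < \<delta> \<Longrightarrow> \<bar>f (exp s) - f (exp s')\<bar> \<le> \<eta>"
    using uc unfolding uniformly_continuous_on_def dist_real_def by (metis UNIV_I abs_minus_commute less_imp_le)
  have "\<bar>E_op K w r f x - f x\<bar> \<le> \<epsilon>" if w: "w \<ge> (\<gamma> + r) / \<delta> + 1" and x: "x > 0" for w x
  proof -
    have "(\<gamma> + r) / \<delta> \<ge> 0" using \<open>\<delta> > 0\<close> by (simp add: \<gamma>_def)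
    with w have "w > 0" "(\<gamma> + r) / \<delta> < w" by linarith+
    then have "(\<gamma> + r) / w < \<delta>" using \<open>\<delta> > 0\<close> by (simp add: field_simps)
    have "\<bar>E_op K w r f x - f x\<bar> \<le> 2 ^ r * \<eta> * M + D * \<tau>"
      unfolding M_def D_def using \<open>\<eta> > 0\<close> x
      by (intro abs_E_op_diff_le_modulus[OF r bound meas \<delta> _ \<open>w > 0\<close> \<open>(\<gamma> + r) / w < \<delta>\<close>] \<Gamma>)
        (auto simp: \<gamma>_def)
    also have "\<dots> \<le> 2 ^ r * \<eta> * (M + 1) + \<tau> * (D + 1)"
      using \<open>\<eta> > 0\<close> \<open>\<tau> > 0\<close> by (simp add: algebra_simps)
    also have "\<dots> = \<epsilon>"
      using \<open>M \<ge> 0\<close> \<open>D \<ge> 0\<close> unfolding \<eta>_def \<tau>_def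
      by (simp add: divide_simps) (simp add: algebra_simps)
    finally show ?thesis .
  qed
  then show ?thesis by (auto simp: eventually_at_top_linorder)
qed

lemma measurable_kernel_exp [measurable]: "(\<lambda>s. K (exp s)) \<in> borel_measurable borel"
  by (intro borel_measurable_continuous_onI continuous_on_compose2[OF continuous_on_kernel])
    (auto intro!: continuous_intros)

lemma nn_integral_kernel_exp_finite: "(\<integral>\<^sup>+s. ennreal \<bar>K (exp s)\<bar> \<partial>lborel) < \<infinity>"
proof -
  define g where "g x = indicator {0<..} x *\<^sub>R \<bar>K x\<bar>" for x :: real
  have g_meas: "g \<in> borel_measurable borel"
    unfolding g_def[abs_def]
    by (rule borel_measurable_continuous_on_indicator) (auto intro!: continuous_intros continuous_on_kernel)
  have "(\<integral>\<^sup>+s. ennreal (g (exp s)) \<partial>lborel) = (\<integral>\<^sup>+x\<in>{0<..}. ennreal (g x / x) \<partial>lborel)"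
    by (rule nn_integral_mellin_eq_exp[symmetric, OF g_meas]) (simp add: g_def)
  also have "\<dots> = (\<integral>\<^sup>+x\<in>{0<..}. ennreal (\<bar>K x\<bar> / x) \<partial>lborel)"
    by (intro nn_integral_cong) (simp add: g_def split: split_indicator)
  finally show ?thesis using nn_integral_kernel_mellin_finite by (simp add: g_def)
qed

lemma kernel_log_tail_small:
  assumes "\<theta> > 0"
  shows "\<exists>R. kernel_log_tail K R < ennreal \<theta>"
proof -
  define h where "h n s = ennreal (\<bar>K (exp s)\<bar> * indicator {s. real n \<le> \<bar>s\<bar>} s)" for n :: nat and s
  have "decseq h"
    unfolding h_def by (intro decseq_SucI le_funI) (auto intro!: ennreal_leI split: split_indicator)
  moreover have "h n \<in> borel_measurable lborel" for n unfolding h_def by measurable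
  moreover have "(\<integral>\<^sup>+s. h n s \<partial>lborel) < \<infinity>" for n
  proof -
    have "(\<integral>\<^sup>+s. h n s \<partial>lborel) \<le> (\<integral>\<^sup>+s. ennreal \<bar>K (exp s)\<bar> \<partial>lborel)"
      unfolding h_def by (intro nn_integral_mono) (auto intro!: ennreal_leI split: split_indicator)
    then show ?thesis using nn_integral_kernel_exp_finite by (simp add: le_less_trans)
  qed
  ultimately have "(\<integral>\<^sup>+s. (INF n. h n s) \<partial>lborel) = (INF n. integral\<^sup>N lborel (h n))"
    by (rule nn_integral_monotone_convergence_INF_decseq)
  moreover have "(INF n. h n s) = 0" for s
  proof -
    obtain n :: nat where "\<bar>s\<bar> < real n" using reals_Archimedean2 by blast
    then have "h n s = 0" by (simp add: h_def)
    then show ?thesis by (metis INF_lower UNIV_I le_zero_eq)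
  qed
  ultimately have "(INF n. integral\<^sup>N lborel (h n)) < ennreal \<theta>" using assms by simp
  then obtain n where "integral\<^sup>N lborel (h n) < ennreal \<theta>" by (auto simp: INF_less_iff)
  then show ?thesis unfolding kernel_log_tail_def h_def by blast
qed

lemma nn_integral_kernel_log_tail_affine:
  assumes "w > 0"
  shows "(\<integral>\<^sup>+s. ennreal (\<bar>K (exp (w * s - c))\<bar> * indicator {s. R \<le> \<bar>s\<bar>} (w * s - c)) \<partial>lborel)
    = ennreal (1 / w) * kernel_log_tail K R"
proof -
  have "kernel_log_tail K R
      = ennreal w * (\<integral>\<^sup>+s. ennreal (\<bar>K (exp (w * s - c))\<bar> * indicator {s. R \<le> \<bar>s\<bar>} (w * s - c)) \<partial>lborel)"
    unfolding kernel_log_tail_def using assms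
    by (subst nn_integral_real_affine[where c = w and t = "- c"]) auto
  then have "ennreal (1 / w) * kernel_log_tail K R
      = (ennreal (1 / w) * ennreal w) * (\<integral>\<^sup>+s. ennreal (\<bar>K (exp (w * s - c))\<bar> * indicator {s. R \<le> \<bar>s\<bar>} (w * s - c)) \<partial>lborel)"
    by (simp only: mult.assoc)
  also have "ennreal (1 / w) * ennreal w = 1"
    using assms by (simp add: ennreal_mult[symmetric] del: ennreal_mult')
  finally show ?thesis by simp
qed

lemma nn_integral_window_tail_le:
  assumes "w \<ge> 1" "0 < a" "a \<le> b"
  shows "(\<integral>\<^sup>+s. (\<Sum>k\<in>window a b r w. ennreal (\<bar>K (exp (w * s - k))\<bar> * indicator {s. R \<le> \<bar>s\<bar>} (w * s - k))) \<partial>lborel)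
    \<le> ennreal (ln b - ln a + r + 1) * kernel_log_tail K R"
proof -
  have "(\<integral>\<^sup>+s. (\<Sum>k\<in>window a b r w. ennreal (\<bar>K (exp (w * s - k))\<bar> * indicator {s. R \<le> \<bar>s\<bar>} (w * s - k))) \<partial>lborel)
      = (\<Sum>k\<in>window a b r w. ennreal (1 / w) * kernel_log_tail K R)"
    using assms(1) by (subst nn_integral_sum) (auto simp: nn_integral_kernel_log_tail_affine)
  also have "\<dots> = ennreal (real (card (window a b r w))) * (ennreal (1 / w) * kernel_log_tail K R)"
    by (simp add: ennreal_of_nat_eq_real_of_nat)
  also have "\<dots> = ennreal (real (card (window a b r w)) * (1 / w)) * kernel_log_tail K R"
    by (simp only: ennreal_mult'[OF of_nat_0_le_iff] mult.assoc)
  also have "\<dots> = ennreal (real (card (window a b r w)) / w) * kernel_log_tail K R"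
    by simp
  also have "\<dots> \<le> ennreal (ln b - ln a + r + 1) * kernel_log_tail K R"
    using card_window_le[OF assms, of r] assms(1)
    by (intro mult_right_mono ennreal_leI) (auto simp: field_simps)
  finally show ?thesis .
qed

lemma Lp_mellin_1_E_op_diff_le:
  assumes r: "r \<ge> 1" and "compact_support_fun f a b B" and w: "w \<ge> 1" "R + r \<le> w"
    and unif: "\<forall>x>0. \<bar>E_op K w r f x - f x\<bar> \<le> \<epsilon>"
  shows "Lp_mellin_pow 1 (\<lambda>x. E_op K w r f x - f x) \<le> ennreal \<epsilon> * ennreal (ln b - ln a + 2)
    + ennreal (2 ^ r * B) * (ennreal (ln b - ln a + r + 1) * kernel_log_tail K R)"
proof -
  interpret compact_support_fun f a b B by fact
  have "ln a \<le> ln b" "B \<ge> 0" "\<epsilon> \<ge> 0" using support bounded[of 1] unif by auto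
  define I where "I = {ln a - 1..ln b + 1}"
  define \<tau> where "\<tau> s = \<bar>K (exp s)\<bar> * indicator {s. R \<le> \<bar>s\<bar>} s" for s
  define \<Phi> where "\<Phi> s = \<epsilon> * indicator I s + 2 ^ r * B * (\<Sum>k\<in>window a b r w. \<tau> (w * s - k))" for s
  have "\<tau> s \<ge> 0" for s by (simp add: \<tau>_def)
  have [measurable]: "\<tau> \<in> borel_measurable borel" unfolding \<tau>_def by measurable
  have [measurable]: "\<Phi> \<in> borel_measurable borel" unfolding \<Phi>_def I_def by measurable
  have pointwise: "\<bar>E_op K w r f x - f x\<bar> \<le> \<Phi> (ln x)" if "x > 0" for x
    unfolding \<Phi>_def \<tau>_def I_def using w
    by (intro abs_E_op_diff_le_window_tail[OF _ r \<open>R + r \<le> w\<close> unif that]) simp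
  have \<Phi>_split: "ennreal (\<Phi> s) = ennreal \<epsilon> * indicator I s + ennreal (2 ^ r * B) *
      (\<Sum>k\<in>window a b r w. ennreal (\<tau> (w * s - k)))" for s
    using \<open>\<epsilon> \<ge> 0\<close> \<open>B \<ge> 0\<close> \<open>\<And>s. \<tau> s \<ge> 0\<close> unfolding \<Phi>_def
    by (simp add: ennreal_mult sum_nonneg sum_ennreal split: split_indicator)
  have "Lp_mellin_pow 1 (\<lambda>x. E_op K w r f x - f x) \<le> (\<integral>\<^sup>+x\<in>{0<..}. ennreal (\<Phi> (ln x) / x) \<partial>lborel)"
    unfolding Lp_mellin_pow_def using pointwise
    by (intro nn_integral_mono) (auto intro!: ennreal_leI divide_right_mono split: split_indicator)
  also have "\<dots> = (\<integral>\<^sup>+s. ennreal (\<Phi> (ln (exp s))) \<partial>lborel)"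
    by (rule nn_integral_mellin_eq_exp, measurable)
      (use \<open>\<epsilon> \<ge> 0\<close> \<open>B \<ge> 0\<close> \<open>\<And>s. \<tau> s \<ge> 0\<close> in
        \<open>auto simp: \<Phi>_def intro!: add_nonneg_nonneg mult_nonneg_nonneg sum_nonneg\<close>)
  also have "\<dots> = ennreal \<epsilon> * emeasure lborel I + ennreal (2 ^ r * B) *
      (\<integral>\<^sup>+s. (\<Sum>k\<in>window a b r w. ennreal (\<tau> (w * s - k))) \<partial>lborel)"
    unfolding ln_exp \<Phi>_split
    by (subst nn_integral_add) (auto simp: nn_integral_cmult I_def)
  also have "\<dots> \<le> ennreal \<epsilon> * ennreal (ln b - ln a + 2)
      + ennreal (2 ^ r * B) * (ennreal (ln b - ln a + r + 1) * kernel_log_tail K R)"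
  proof (intro add_mono mult_left_mono)
    show "emeasure lborel I \<le> ennreal (ln b - ln a + 2)"
      using \<open>ln a \<le> ln b\<close> by (simp add: I_def)
    show "(\<integral>\<^sup>+s. (\<Sum>k\<in>window a b r w. ennreal (\<tau> (w * s - k))) \<partial>lborel)
        \<le> ennreal (ln b - ln a + r + 1) * kernel_log_tail K R"
      unfolding \<tau>_def by (rule nn_integral_window_tail_le[OF w(1) support(1,2)])
  qed simp_all
  finally show ?thesis .
qed

theorem E_op_mellin_L1_small:
  assumes r: "r \<ge> 1" and f: "compact_support_fun f a b B" and "\<theta> > 0"
  shows "eventually (\<lambda>w. Lp_mellin_pow 1 (\<lambda>x. E_op K w r f x - f x) \<le> ennreal \<theta>) at_top"
proof -
  interpret compact_support_fun f a b B by fact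
  have "ln a \<le> ln b" "B \<ge> 0" using support bounded[of 1] by auto
  define L where "L = ln b - ln a + 2"
  define \<Lambda> where "\<Lambda> = ln b - ln a + r + 1"
  define C where "C = 2 ^ r * B * \<Lambda>"
  define \<epsilon> where "\<epsilon> = \<theta> / (2 * L)"
  define \<theta>' where "\<theta>' = \<theta> / (2 * (C + 1))"
  have "L > 0" "\<Lambda> \<ge> 0" "C \<ge> 0"
    using \<open>ln a \<le> ln b\<close> \<open>B \<ge> 0\<close> by (auto simp: L_def \<Lambda>_def C_def)
  then have "\<epsilon> > 0" "\<theta>' > 0" using \<open>\<theta> > 0\<close> by (simp_all add: \<epsilon>_def \<theta>'_def)
  then obtain R where R: "kernel_log_tail K R < ennreal \<theta>'" using kernel_log_tail_small by blast
  have "eventually (\<lambda>w. \<forall>x>0. \<bar>E_op K w r f x - f x\<bar> \<le> \<epsilon>) at_top"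
    using r bounded uniformly_continuous_on_exp \<open>\<epsilon> > 0\<close> by (rule E_op_uniform_convergence)
  moreover have "eventually (\<lambda>w. max 1 (R + r) \<le> w) at_top" by (rule eventually_ge_at_top)
  ultimately show ?thesis
  proof eventually_elim
    case (elim w)
    then have "Lp_mellin_pow 1 (\<lambda>x. E_op K w r f x - f x)
        \<le> ennreal \<epsilon> * ennreal L + ennreal (2 ^ r * B) * (ennreal \<Lambda> * kernel_log_tail K R)"
      unfolding L_def \<Lambda>_def by (intro Lp_mellin_1_E_op_diff_le[OF r f]) auto
    also have "\<dots> \<le> ennreal \<epsilon> * ennreal L + ennreal (2 ^ r * B) * (ennreal \<Lambda> * ennreal \<theta>')"
      using R by (intro add_left_mono mult_left_mono) auto
    also have "\<dots> = ennreal (\<epsilon> * L + 2 ^ r * B * (\<Lambda> * \<theta>'))"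
      using less_imp_le[OF \<open>\<epsilon> > 0\<close>] less_imp_le[OF \<open>L > 0\<close>] \<open>B \<ge> 0\<close> \<open>\<Lambda> \<ge> 0\<close> less_imp_le[OF \<open>\<theta>' > 0\<close>]
      by (simp add: ennreal_mult[symmetric] ennreal_plus[symmetric] del: ennreal_mult' ennreal_plus)
    also have "\<dots> = ennreal (\<theta> / 2 + C * (\<theta> / (2 * (C + 1))))"
      using \<open>L > 0\<close> by (simp add: \<epsilon>_def \<theta>'_def C_def mult.assoc)
    also have "\<dots> \<le> ennreal \<theta>"
      using \<open>C \<ge> 0\<close> \<open>\<theta> > 0\<close> by (intro ennreal_leI) (simp add: field_simps)
    finally show ?case .
  qed
qed
end

theorem theorem3:
  fixes K f :: "real \<Rightarrow> real" and r :: nat and p :: real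
  assumes "r \<ge> 1"
    and "is_kernel K"
    and "M0 K > 0"
    and "CB_comp f"
    and "1 \<le> p"
  shows "eventually (\<lambda>w. Lp_mellin_pow p (\<lambda>x. E_op K w r f x - f x) < \<infinity>) at_top \<and>
         ((\<lambda>w. Lp_mellin_norm p (\<lambda>x. E_op K w r f x - f x)) \<longlongrightarrow> 0) at_top"
proof (rule Lp_mellin_norm_tendsto_0)
  interpret mellin_kernel K by (rule mellin_kernel.intro) fact
  obtain a b B where f: "compact_support_fun f a b B" using \<open>CB_comp f\<close> by (rule CB_compE)
  then interpret compact_support_fun f a b B .
  fix \<theta> :: real assume "\<theta> > 0"
  have "eventually (\<lambda>w. \<forall>x>0. \<bar>E_op K w r f x - f x\<bar> \<le> 1) at_top"
    by (rule E_op_uniform_convergence[OF \<open>r \<ge> 1\<close> bounded uniformly_continuous_on_exp zero_less_one])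
  moreover have "eventually (\<lambda>w. Lp_mellin_pow 1 (\<lambda>x. E_op K w r f x - f x) \<le> ennreal \<theta>) at_top"
    using \<open>r \<ge> 1\<close> f \<open>\<theta> > 0\<close> by (rule E_op_mellin_L1_small)
  ultimately show "eventually (\<lambda>w. Lp_mellin_pow p (\<lambda>x. E_op K w r f x - f x) \<le> ennreal \<theta>) at_top"
  proof eventually_elim
    case (elim w)
    have "Lp_mellin_pow p (\<lambda>x. E_op K w r f x - f x) \<le> Lp_mellin_pow 1 (\<lambda>x. E_op K w r f x - f x)"
      using elim(1) by (intro Lp_mellin_pow_le_Lp_mellin_pow_1[OF \<open>1 \<le> p\<close>]) auto
    then show ?case using elim(2) by (rule order_trans)
  qed
qed (use \<open>1 \<le> p\<close> in simp)

end
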